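(* Let $(E,\|\cdot\|)$ be a finite-dimensional normed space over $K$ and let $D\subseteq E$ be a one-dimensional subspace. Then for each $f\in D'$ with $\|f\|=1$ there exists an extension $\tilde f\in E'$ of $f$ with $\|\tilde f\|=1$ if and only if either $\|D\|\cap V_K=\emptyset$, or there is a subspace $F\subseteq E$ such that $E\cong D\oplus F$ (i.e. $E=D+F$ and $\|d+u\|=\max(\|d\|,\|u\|)$ for all $d\in D$, $u\in F$).
   Context: $K$ is a complete non-archimedean non-trivially valued field which is not spherically complete, with valuation group $V_K=\{|x|:x\in K\setminus\{0\}\}$. Normed spaces are non-archimedean normed spaces over $K$; $E'$ is the dual with operator norm. $\|D\|=\{\|d\|:d\in D\}$. *)

theory Defs
  imports Complex_Main
begin

definition nonarch_abs :: "('k::field \<Rightarrow> real) \<Rightarrow> bool" where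
  "nonarch_abs a \<longleftrightarrow>
     (\<forall>x. a x \<ge> 0) \<and> (\<forall>x. a x = 0 \<longleftrightarrow> x = 0) \<and>
     (\<forall>x y. a (x * y) = a x * a y) \<and>
     (\<forall>x y. a (x + y) \<le> max (a x) (a y))"

definition nontrivial_abs :: "('k::field \<Rightarrow> real) \<Rightarrow> bool" where
  "nontrivial_abs a \<longleftrightarrow> (\<exists>x. a x \<noteq> 0 \<and> a x \<noteq> 1)"

definition complete_abs :: "('k::field \<Rightarrow> real) \<Rightarrow> bool" where
  "complete_abs a \<longleftrightarrow>
     (\<forall>X::nat \<Rightarrow> 'k.
        (\<forall>e>0. \<exists>M. \<forall>m\<ge>M. \<forall>n\<ge>M. a (X m - X n) < e) \<longrightarrow>
        (\<exists>L. \<forall>e>0. \<exists>M. \<forall>n\<ge>M. a (X n - L) < e))"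

definition closed_ball_abs :: "('k::field \<Rightarrow> real) \<Rightarrow> 'k \<Rightarrow> real \<Rightarrow> 'k set" where
  "closed_ball_abs a c r = {x. a (x - c) \<le> r}"

definition spherically_complete_abs :: "('k::field \<Rightarrow> real) \<Rightarrow> bool" where
  "spherically_complete_abs a \<longleftrightarrow>
     (\<forall>\<C>. \<C> \<noteq> {} \<and> (\<forall>B\<in>\<C>. \<exists>c r. r > 0 \<and> B = closed_ball_abs a c r) \<and>
          (\<forall>B1\<in>\<C>. \<forall>B2\<in>\<C>. B1 \<subseteq> B2 \<or> B2 \<subseteq> B1)
          \<longrightarrow> \<Inter>\<C> \<noteq> {})"

definition value_group :: "('k::field \<Rightarrow> real) \<Rightarrow> real set" where
  "value_group a = {a x | x. x \<noteq> 0}"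

definition nonarch_norm ::
  "('k::field \<Rightarrow> real) \<Rightarrow> ('k \<Rightarrow> 'e::ab_group_add \<Rightarrow> 'e) \<Rightarrow> ('e \<Rightarrow> real) \<Rightarrow> bool" where
  "nonarch_norm a scale N \<longleftrightarrow>
     (\<forall>x. N x \<ge> 0) \<and> (\<forall>x. N x = 0 \<longleftrightarrow> x = 0) \<and>
     (\<forall>c x. N (scale c x) = a c * N x) \<and>
     (\<forall>x y. N (x + y) \<le> max (N x) (N y))"

definition finite_dim_space :: "('k::field \<Rightarrow> 'e::ab_group_add \<Rightarrow> 'e) \<Rightarrow> bool" where
  "finite_dim_space scale \<longleftrightarrow> (\<exists>B. finite B \<and> module.span scale B = UNIV)"

text \<open>Linear functional on a subspace S (values outside S irrelevant).\<close>
definition linear_on ::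
  "('k::field \<Rightarrow> 'e::ab_group_add \<Rightarrow> 'e) \<Rightarrow> 'e set \<Rightarrow> ('e \<Rightarrow> 'k) \<Rightarrow> bool" where
  "linear_on scale S f \<longleftrightarrow>
     (\<forall>x\<in>S. \<forall>y\<in>S. f (x + y) = f x + f y) \<and> (\<forall>c. \<forall>x\<in>S. f (scale c x) = c * f x)"

definition dual_on ::
  "('k::field \<Rightarrow> real) \<Rightarrow> ('k \<Rightarrow> 'e::ab_group_add \<Rightarrow> 'e) \<Rightarrow> ('e \<Rightarrow> real) \<Rightarrow> 'e set \<Rightarrow> ('e \<Rightarrow> 'k) set" where
  "dual_on a scale N S = {f. linear_on scale S f \<and> (\<exists>C. \<forall>x\<in>S. a (f x) \<le> C * N x)}"

definition opnorm_on ::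
  "('k::field \<Rightarrow> real) \<Rightarrow> ('e::ab_group_add \<Rightarrow> real) \<Rightarrow> 'e set \<Rightarrow> ('e \<Rightarrow> 'k) \<Rightarrow> real" where
  "opnorm_on a N S f = Sup {a (f x) / N x | x. x \<in> S \<and> x \<noteq> 0}"

end

theory Submission
  imports Defs
begin

(* On a line D = K e every linear functional satisfies |f x| = \<parallel>f\<parallel> \<parallel>x\<parallel>, so a norm-one
   functional on D exists iff \<parallel>e\<parallel> = |c| for some c \<noteq> 0, i.e. iff \<parallel>D\<parallel> meets V_K; otherwise the
   extension property holds vacuously.  If g is a norm-one extension of a norm-one f, then
   |g| \<le> \<parallel>.\<parallel> with equality on D, and for u in the kernel F of g we get
   \<parallel>d\<parallel> = |g (d + u)| \<le> \<parallel>d + u\<parallel>, which by the ultrametric inequality forces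
   \<parallel>d + u\<parallel> = max \<parallel>d\<parallel> \<parallel>u\<parallel>.  Conversely, if F is such a complement, composing f with the
   projection onto D along F preserves the norm. *)

context vector_space
begin

lemma mem_line_self: "e \<in> range (\<lambda>k. scale k e)"
  by (metis rangeI scale_one)

lemma linear_on_zero:
  assumes "linear_on scale S f" "0 \<in> S"
  shows "f 0 = 0"
  using assms scale_zero_left[of 0] unfolding linear_on_def by (metis mult_zero_left)

lemma obtain_line_of_dim_eq_1:
  assumes "subspace D" "dim D = 1"
  obtains e where "e \<noteq> 0" "D = range (\<lambda>k. scale k e)"
proof -
  obtain B where B: "B \<subseteq> D" "independent B" "D \<subseteq> span B" "card B = 1"
    using basis_exists[of D] assms(2) by metis
  then obtain e where "B = {e}"
    using card_1_singleton_iff by (metis One_nat_def)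
  with B assms(1) have "e \<noteq> 0" "D = range (\<lambda>k. scale k e)"
    using span_singleton subspace_scale by auto
  then show ?thesis
    using that by blast
qed

lemma line_generated_by_nonzero:
  assumes D: "D = range (\<lambda>k. scale k e)" and d: "d \<in> D" "d \<noteq> 0"
  shows "D = range (\<lambda>k. scale k d)"
proof -
  obtain k0 where k0: "d = scale k0 e" "k0 \<noteq> 0"
    using D d by auto
  have "scale k e \<in> range (\<lambda>k. scale k d)" for k
  proof (rule range_eqI)
    show "scale k e = scale (k / k0) d"
      using k0 by simp
  qed
  moreover have "scale k d \<in> range (\<lambda>k. scale k e)" for k
    using k0(1) by (metis rangeI scale_scale)
  ultimately show ?thesis
    using D by blast
qed

lemma obtain_linear_on_line:
  assumes "d \<noteq> 0"
  obtains f where "linear_on scale (range (\<lambda>k. scale k d)) f" "\<And>k. f (scale k d) = k * c"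
proof -
  define f where "f x = (THE k. x = scale k d) * c" for x
  have f: "f (scale k d) = k * c" for k
    unfolding f_def using assms by (subst the_equality) auto
  have "linear_on scale (range (\<lambda>k. scale k d)) f"
    unfolding linear_on_def
    by (auto simp: f scale_left_distrib[symmetric] distrib_right)
  with f show ?thesis
    using that by blast
qed

end

locale nonarch_normed_space = vector_space scale
  for scale :: "'k::field \<Rightarrow> 'e::ab_group_add \<Rightarrow> 'e" +
  fixes absK :: "'k \<Rightarrow> real" and N :: "'e \<Rightarrow> real"
  assumes nonarch_abs: "nonarch_abs absK"
    and nonarch_norm: "nonarch_norm absK scale N"
begin

lemma abs_eq_0_iff [simp]: "absK x = 0 \<longleftrightarrow> x = 0"
  using nonarch_abs unfolding nonarch_abs_def by blast

lemma abs_zero [simp]: "absK 0 = 0"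
  by simp

lemma abs_nonneg: "absK x \<ge> 0"
  using nonarch_abs unfolding nonarch_abs_def by blast

lemma abs_mult: "absK (x * y) = absK x * absK y"
  using nonarch_abs unfolding nonarch_abs_def by blast

lemma abs_minus_one [simp]: "absK (- 1) = 1"
proof -
  have "absK 1 = absK 1 * absK 1"
    using abs_mult[of 1 1] by simp
  then have one: "absK 1 = 1"
    by simp
  have "(absK (- 1) - 1) * (absK (- 1) + 1) = 0"
    using abs_mult[of "- 1" "- 1"] one by (simp add: algebra_simps)
  with abs_nonneg[of "- 1"] show ?thesis
    by simp
qed

lemma norm_eq_0_iff [simp]: "N x = 0 \<longleftrightarrow> x = 0"
  using nonarch_norm unfolding nonarch_norm_def by blast

lemma norm_zero [simp]: "N 0 = 0"
  by simp

lemma norm_pos: "x \<noteq> 0 \<Longrightarrow> N x > 0"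
  using nonarch_norm norm_eq_0_iff unfolding nonarch_norm_def by (metis less_eq_real_def)

lemma norm_scale: "N (scale c x) = absK c * N x"
  using nonarch_norm unfolding nonarch_norm_def by blast

lemma norm_ultrametric: "N (x + y) \<le> max (N x) (N y)"
  using nonarch_norm unfolding nonarch_norm_def by blast

lemma norm_minus [simp]: "N (- x) = N x"
  using norm_scale[of "- 1" x] by simp

lemma norm_add_eq_max_of_le:
  assumes "N d \<le> N (d + u)"
  shows "N (d + u) = max (N d) (N u)"
proof -
  have "N u \<le> max (N (d + u)) (N (- d))"
    using norm_ultrametric[of "d + u" "- d"] by simp
  then show ?thesis
    using assms norm_ultrametric[of d u] by simp
qed

lemma opnorm_on_bound:
  assumes f: "f \<in> dual_on absK scale N S" and x: "x \<in> S"
  shows "absK (f x) \<le> opnorm_on absK N S f * N x"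
proof (cases "x = 0")
  case True
  then show ?thesis
    using f x linear_on_zero[of S f] unfolding dual_on_def by simp
next
  case False
  obtain C where C: "\<forall>y\<in>S. absK (f y) \<le> C * N y"
    using f unfolding dual_on_def by blast
  have "bdd_above {absK (f y) / N y | y. y \<in> S \<and> y \<noteq> 0}"
    using C norm_pos by (auto intro!: bdd_aboveI[of _ C] simp: divide_le_eq)
  then have "absK (f x) / N x \<le> opnorm_on absK N S f"
    unfolding opnorm_on_def using x False by (auto intro!: cSup_upper)
  then show ?thesis
    using norm_pos[OF False] by (simp add: divide_le_eq)
qed

lemma opnorm_on_least:
  assumes "\<forall>x\<in>S. absK (f x) \<le> c * N x" "x0 \<in> S" "x0 \<noteq> 0"
  shows "opnorm_on absK N S f \<le> c"
  unfolding opnorm_on_def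
  using assms norm_pos by (auto intro!: cSup_least simp: divide_le_eq)

lemma opnorm_on_eq_attained:
  assumes "\<forall>x\<in>S. absK (f x) \<le> c * N x" "x0 \<in> S" "x0 \<noteq> 0" "absK (f x0) = c * N x0"
  shows "opnorm_on absK N S f = c"
  unfolding opnorm_on_def
proof (rule cSup_eq_maximum)
  show "c \<in> {absK (f x) / N x | x. x \<in> S \<and> x \<noteq> 0}"
    using assms(2-4) norm_pos[OF assms(3)] by force
qed (use assms(1) norm_pos in \<open>auto simp: divide_le_eq\<close>)

lemma abs_linear_on_line:
  assumes D: "D = range (\<lambda>k. scale k e)" and e: "e \<noteq> 0"
    and f: "linear_on scale D f" and x: "x \<in> D"
  shows "absK (f x) = opnorm_on absK N D f * N x"
proof -
  define c where "c = absK (f e) / N e"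
  have eD: "e \<in> D"
    using D mem_line_self by blast
  have ratio: "absK (f y) = c * N y" if y: "y \<in> D" for y
  proof -
    obtain k where k: "y = scale k e"
      using y D by blast
    then have "f y = k * f e"
      using f eD unfolding linear_on_def by blast
    then show ?thesis
      using k e norm_pos[OF e] by (simp add: c_def abs_mult norm_scale)
  qed
  then have "opnorm_on absK N D f = c"
    using eD e by (intro opnorm_on_eq_attained) auto
  then show ?thesis
    using ratio x by simp
qed

lemma norm_one_functional_on_line_iff:
  assumes D: "D = range (\<lambda>k. scale k e)" and e: "e \<noteq> 0"
  shows "(\<exists>f\<in>dual_on absK scale N D. opnorm_on absK N D f = 1)
    \<longleftrightarrow> {N d | d. d \<in> D} \<inter> value_group absK \<noteq> {}"
proof
  assume "\<exists>f\<in>dual_on absK scale N D. opnorm_on absK N D f = 1"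
  then obtain f where f: "linear_on scale D f" "opnorm_on absK N D f = 1"
    unfolding dual_on_def by blast
  have eD: "e \<in> D"
    using D mem_line_self by blast
  then have "absK (f e) = N e"
    using abs_linear_on_line[OF D e f(1)] f(2) by simp
  moreover have "f e \<noteq> 0"
    using calculation e by auto
  ultimately show "{N d | d. d \<in> D} \<inter> value_group absK \<noteq> {}"
    using eD unfolding value_group_def by blast
next
  assume "{N d | d. d \<in> D} \<inter> value_group absK \<noteq> {}"
  then obtain d c where d: "d \<in> D" "N d = absK c" "c \<noteq> 0"
    unfolding value_group_def by blast
  then have "d \<noteq> 0"
    by auto
  then have Dd: "D = range (\<lambda>k. scale k d)"
    using line_generated_by_nonzero[OF D d(1)] by blast
  obtain f where f: "linear_on scale D f" "\<And>k. f (scale k d) = k * c"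
    using obtain_linear_on_line[OF \<open>d \<noteq> 0\<close>] Dd by metis
  have "absK (f x) = N x" if "x \<in> D" for x
    using that Dd f(2) d(2) by (auto simp: abs_mult norm_scale)
  then have "f \<in> dual_on absK scale N D" "opnorm_on absK N D f = 1"
    using f(1) d(1) \<open>d \<noteq> 0\<close> unfolding dual_on_def
    by (auto intro!: opnorm_on_eq_attained exI[of _ 1])
  then show "\<exists>f\<in>dual_on absK scale N D. opnorm_on absK N D f = 1"
    by blast
qed

definition orthocomplement :: "'e set \<Rightarrow> 'e set \<Rightarrow> bool" where
  "orthocomplement D F \<longleftrightarrow> subspace F \<and> (\<forall>x. \<exists>d\<in>D. \<exists>u\<in>F. x = d + u) \<and>
     (\<forall>d\<in>D. \<forall>u\<in>F. N (d + u) = max (N d) (N u))"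

lemma kernel_orthocomplement:
  assumes g: "linear_on scale UNIV g" and bound: "\<forall>x. absK (g x) \<le> N x"
    and D: "D = range (\<lambda>k. scale k e)" and e: "e \<noteq> 0"
    and isometric: "\<forall>x\<in>D. absK (g x) = N x"
  shows "orthocomplement D {x. g x = 0}"
  unfolding orthocomplement_def
proof (intro conjI allI ballI)
  have add: "g (x + y) = g x + g y" and scale: "g (scale c x) = c * g x" for x y c
    using g unfolding linear_on_def by blast+
  then have diff: "g (x - y) = g x - g y" for x y
    by (metis add_diff_cancel eq_diff_eq)
  show "subspace {x. g x = 0}"
    unfolding subspace_def using add scale linear_on_zero[OF g] by simp
  have eD: "e \<in> D"
    using D mem_line_self by blast
  then have "g e \<noteq> 0"
    using isometric e by auto
  fix x
  define d where "d = scale (g x / g e) e"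
  have "d \<in> D" "g d = g x"
    unfolding d_def using D scale \<open>g e \<noteq> 0\<close> by auto
  then show "\<exists>d\<in>D. \<exists>u\<in>{x. g x = 0}. x = d + u"
    using diff[of x d] by (intro bexI[of _ d] bexI[of _ "x - d"]) auto
next
  fix d u assume d: "d \<in> D" and u: "u \<in> {x. g x = 0}"
  have "g (d + u) = g d"
    using g u unfolding linear_on_def by simp
  then have "N d \<le> N (d + u)"
    using bound isometric d by metis
  then show "N (d + u) = max (N d) (N u)"
    by (rule norm_add_eq_max_of_le)
qed

lemma orthocomplement_inter:
  assumes F: "orthocomplement D F" and z: "z \<in> D" "z \<in> F"
  shows "z = 0"
proof -
  have "- z \<in> F"
    using F z(2) subspace_neg unfolding orthocomplement_def by blast
  then have "N (z + - z) = max (N z) (N (- z))"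
    using F z(1) unfolding orthocomplement_def by blast
  then show ?thesis
    by simp
qed

lemma obtain_orthocomplement_projection:
  assumes F: "orthocomplement D F" and D: "subspace D"
  obtains p where "\<And>d u. d \<in> D \<Longrightarrow> u \<in> F \<Longrightarrow> p (d + u) = d"
proof
  fix d u assume d: "d \<in> D" and u: "u \<in> F"
  have F_sub: "subspace F"
    using F unfolding orthocomplement_def by blast
  show "(THE d'. d' \<in> D \<and> d + u - d' \<in> F) = d"
  proof (rule the_equality)
    fix d' assume d': "d' \<in> D \<and> d + u - d' \<in> F"
    have "d - d' \<in> D"
      using D d d' subspace_diff by blast
    moreover have "d - d' \<in> F"
      using F_sub d' u subspace_diff[of F "d + u - d'" u] by (simp add: algebra_simps)
    ultimately show "d' = d"
      using orthocomplement_inter[OF F] by fastforce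
  qed (use d u in simp)
qed

lemma linear_on_comp_orthocomplement_projection:
  assumes F: "orthocomplement D F" and D: "subspace D" and f: "linear_on scale D f"
    and p: "\<And>d u. d \<in> D \<Longrightarrow> u \<in> F \<Longrightarrow> p (d + u) = d"
  shows "linear_on scale UNIV (f \<circ> p)"
  unfolding linear_on_def
proof (intro conjI ballI allI)
  have F_sub: "subspace F" and decomp: "\<And>x. \<exists>d\<in>D. \<exists>u\<in>F. x = d + u"
    using F unfolding orthocomplement_def by blast+
  fix x y c
  obtain d u where du: "d \<in> D" "u \<in> F" "x = d + u"
    using decomp by blast
  obtain d' u' where du': "d' \<in> D" "u' \<in> F" "y = d' + u'"
    using decomp by blast
  have "x + y = (d + d') + (u + u')"
    using du du' by (simp add: algebra_simps)
  then have "p (x + y) = d + d'"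
    using p du du' D F_sub subspace_add by metis
  then show "(f \<circ> p) (x + y) = (f \<circ> p) x + (f \<circ> p) y"
    using f du du' p unfolding linear_on_def by simp
  have "p (scale c x) = scale c d"
    using p du D F_sub subspace_scale scale_right_distrib by metis
  then show "(f \<circ> p) (scale c x) = c * (f \<circ> p) x"
    using f du p unfolding linear_on_def by simp
qed

lemma orthocomplement_extension:
  assumes F: "orthocomplement D F" and D: "subspace D"
    and f: "f \<in> dual_on absK scale N D" and x0: "x0 \<in> D" "x0 \<noteq> 0"
  obtains g where "g \<in> dual_on absK scale N UNIV" "\<forall>x\<in>D. g x = f x"
    "opnorm_on absK N UNIV g = opnorm_on absK N D f"
proof -
  obtain p where p: "\<And>d u. d \<in> D \<Longrightarrow> u \<in> F \<Longrightarrow> p (d + u) = d"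
    using obtain_orthocomplement_projection[OF F D] by blast
  define g where "g = f \<circ> p"
  have decomp: "\<And>x. \<exists>d\<in>D. \<exists>u\<in>F. x = d + u"
    and ortho: "\<And>d u. d \<in> D \<Longrightarrow> u \<in> F \<Longrightarrow> N (d + u) = max (N d) (N u)"
    using F unfolding orthocomplement_def by blast+
  have g_ext: "\<forall>x\<in>D. g x = f x"
    using p[of _ 0] F subspace_0 unfolding g_def orthocomplement_def by fastforce
  define c where "c = opnorm_on absK N D f"
  have "absK (f x0) \<le> c * N x0"
    unfolding c_def using opnorm_on_bound[OF f x0(1)] .
  then have "c \<ge> 0"
    using norm_pos[OF x0(2)] abs_nonneg[of "f x0"] by (metis order.trans zero_le_mult_iff not_le)
  have g_bound: "absK (g x) \<le> c * N x" for x
  proof -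
    obtain d u where du: "d \<in> D" "u \<in> F" "x = d + u"
      using decomp by blast
    have "absK (g x) = absK (f d)"
      using p du unfolding g_def by simp
    also have "\<dots> \<le> c * N d"
      unfolding c_def using opnorm_on_bound[OF f du(1)] .
    also have "\<dots> \<le> c * N x"
      using ortho[OF du(1,2)] du(3) \<open>c \<ge> 0\<close> by (simp add: mult_left_mono)
    finally show ?thesis .
  qed
  have "linear_on scale UNIV g"
    unfolding g_def using linear_on_comp_orthocomplement_projection[OF F D _ p] f
    unfolding dual_on_def by blast
  with g_bound have g_dual: "g \<in> dual_on absK scale N UNIV"
    unfolding dual_on_def by blast
  have "opnorm_on absK N UNIV g \<le> c"
    using g_bound x0 by (intro opnorm_on_least) auto
  moreover have "\<forall>x\<in>D. absK (f x) \<le> opnorm_on absK N UNIV g * N x"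
    using g_ext opnorm_on_bound[OF g_dual UNIV_I] by metis
  then have "c \<le> opnorm_on absK N UNIV g"
    unfolding c_def using x0 by (rule opnorm_on_least)
  ultimately have "opnorm_on absK N UNIV g = opnorm_on absK N D f"
    unfolding c_def by simp
  with g_dual g_ext that show ?thesis
    by blast
qed

end

theorem mainTheorem6:
  fixes absK :: "'k::field \<Rightarrow> real"
    and scale :: "'k \<Rightarrow> 'e::ab_group_add \<Rightarrow> 'e"
    and N :: "'e \<Rightarrow> real"
    and D :: "'e set"
  assumes "nonarch_abs absK" and "nontrivial_abs absK" and "complete_abs absK"
    and "\<not> spherically_complete_abs absK"
    and "vector_space scale" and "nonarch_norm absK scale N"
    and "finite_dim_space scale"
    and "module.subspace scale D" and "vector_space.dim scale D = 1"
  shows "(\<forall>f\<in>dual_on absK scale N D. opnorm_on absK N D f = 1 \<longrightarrow>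
            (\<exists>g\<in>dual_on absK scale N UNIV. (\<forall>x\<in>D. g x = f x) \<and> opnorm_on absK N UNIV g = 1))
         \<longleftrightarrow>
         ({N d | d. d \<in> D} \<inter> value_group absK = {} \<or>
          (\<exists>F. module.subspace scale F \<and>
               (\<forall>x. \<exists>d\<in>D. \<exists>u\<in>F. x = d + u) \<and>
               (\<forall>d\<in>D. \<forall>u\<in>F. N (d + u) = max (N d) (N u))))"
proof -
  interpret nonarch_normed_space scale absK N
    using assms(1,5,6) by (simp add: nonarch_normed_space_def nonarch_normed_space_axioms_def)
  obtain e where e: "e \<noteq> 0" and D: "D = range (\<lambda>k. scale k e)"
    using obtain_line_of_dim_eq_1 assms(8,9) by blast
  have eD: "e \<in> D"
    using D mem_line_self by blast
  have isometric: "\<forall>x\<in>D. absK (f x) = N x"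
    if "f \<in> dual_on absK scale N D" "opnorm_on absK N D f = 1" for f
    using that abs_linear_on_line[OF D e] unfolding dual_on_def by simp
  show ?thesis
    unfolding orthocomplement_def[symmetric]
  proof
    assume extensions: "\<forall>f\<in>dual_on absK scale N D. opnorm_on absK N D f = 1 \<longrightarrow>
      (\<exists>g\<in>dual_on absK scale N UNIV. (\<forall>x\<in>D. g x = f x) \<and> opnorm_on absK N UNIV g = 1)"
    show "{N d | d. d \<in> D} \<inter> value_group absK = {} \<or> (\<exists>F. orthocomplement D F)"
    proof (cases "{N d | d. d \<in> D} \<inter> value_group absK = {}")
      case False
      then obtain f where f: "f \<in> dual_on absK scale N D" "opnorm_on absK N D f = 1"
        using norm_one_functional_on_line_iff[OF D e] by blast
      then obtain g where g: "g \<in> dual_on absK scale N UNIV" "\<forall>x\<in>D. g x = f x"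
        "opnorm_on absK N UNIV g = 1"
        using extensions by blast
      have "orthocomplement D {x. g x = 0}"
        using g isometric[OF f] opnorm_on_bound[OF g(1)] unfolding dual_on_def
        by (intro kernel_orthocomplement[OF _ _ D e]) auto
      then show ?thesis
        by blast
    qed simp
  next
    assume complement: "{N d | d. d \<in> D} \<inter> value_group absK = {} \<or> (\<exists>F. orthocomplement D F)"
    show "\<forall>f\<in>dual_on absK scale N D. opnorm_on absK N D f = 1 \<longrightarrow>
      (\<exists>g\<in>dual_on absK scale N UNIV. (\<forall>x\<in>D. g x = f x) \<and> opnorm_on absK N UNIV g = 1)"
    proof (intro ballI impI)
      fix f assume f: "f \<in> dual_on absK scale N D" "opnorm_on absK N D f = 1"
      then obtain F where "orthocomplement D F"
        using complement norm_one_functional_on_line_iff[OF D e] by blast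
      from orthocomplement_extension[OF this assms(8) f(1) eD e] f(2)
      show "\<exists>g\<in>dual_on absK scale N UNIV. (\<forall>x\<in>D. g x = f x) \<and> opnorm_on absK N UNIV g = 1"
        by metis
    qed
  qed
qed

end
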